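(* Let $\check p>0$, $\check\alpha>0$, $\gamma\ge0$. For all $x>0$ and $T>0$, \[ \tilde u(x,T)-\mathbb E^x\Big[\mathbf 1_{\{\theta\ge T\}}\Big(\int_T^\theta e^{-rt}\check p\,dt+e^{-r\theta}\check\alpha\Big)\Big]\le\bar u(x,T)\le\tilde u(x,T)+\mathbb E^x\big[\mathbf 1_{\{\theta\ge T\}}e^{-rT}\gamma\big]. \]
   Context: Let $X$ be a spectrally negative Lévy process (no positive jumps, not the negative of a subordinator, Lévy measure without atoms), $\mathbb P^x$ the law with $X_0=x$, $\mathbb E^x$ its expectation, $\mathbb F$ the filtration generated by $X$; $r>0$ fixed with $\log\mathbb E^0[e^{X_1}]=r$. Let $\theta:=\inf\{t\ge0:X_t\le0\}$ ($\inf\emptyset=\infty$, $e^{-r\infty}=0$). $\mathcal S$ is the set of $\mathbb F$-stopping times $\tau\le\theta$ a.s., and for $T>0$, $\mathcal S_T$ the set of $\mathbb F$-stopping times $\tau\le\theta\wedge T$ a.s. Define $u(x):=\sup_{\tau\in\mathcal S}\mathbb E^x\big[\mathbf 1_{\{\tau<\infty\}}\big(-\int_\tau^\theta e^{-rt}\check p\,dt-e^{-r\tau}\gamma\mathbf 1_{\{\tau<\theta\}}+e^{-r\theta}\check\alpha\mathbf 1_{\{\tau<\theta\}}\big)\big]$, $\bar u(x,T):=\sup_{\tau\in\mathcal S_T}\mathbb E^x\big[-\int_\tau^{\theta\wedge T}e^{-rt}\check p\,dt-e^{-r\tau}\gamma\mathbf 1_{\{\tau<\theta\wedge T\}}+e^{-r\theta}\check\alpha\mathbf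 1_{\{\tau<\theta<T\}}\big]$, and $\tilde u(x,T):=u(x)+\mathbb E^x\big[\mathbf 1_{\{\theta\ge T\}}\int_T^\theta e^{-rt}\check p\,dt\big]$. *)

theory Defs
  imports "HOL-Probability.Probability"
begin

text \<open>The process X under P^x is realised as X_t = x + L_t, where L is a
  Levy process started at 0 on a probability space M (L is X under P^0).
  Time is ennreal so that stopping times may take the value infinity.\<close>

definition left_lim :: "(real \<Rightarrow> 'a \<Rightarrow> real) \<Rightarrow> 'a \<Rightarrow> real \<Rightarrow> real" where
  "left_lim L \<omega> t = Lim (at_left t) (\<lambda>s. L s \<omega>)"

definition jump :: "(real \<Rightarrow> 'a \<Rightarrow> real) \<Rightarrow> 'a \<Rightarrow> real \<Rightarrow> real" where
  "jump L \<omega> t = L t \<omega> - left_lim L \<omega> t"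

definition cadlag_paths :: "'a measure \<Rightarrow> (real \<Rightarrow> 'a \<Rightarrow> real) \<Rightarrow> bool" where
  "cadlag_paths M L \<longleftrightarrow> (\<forall>\<omega>\<in>space M.
      (\<forall>t\<ge>0. continuous (at_right t) (\<lambda>s. L s \<omega>)) \<and>
      (\<forall>t>0. \<exists>l. ((\<lambda>s. L s \<omega>) \<longlongrightarrow> l) (at_left t)))"

definition levy_process :: "'a measure \<Rightarrow> (real \<Rightarrow> 'a \<Rightarrow> real) \<Rightarrow> bool" where
  "levy_process M L \<longleftrightarrow>
     prob_space M \<and>
     (\<forall>t. L t \<in> borel_measurable M) \<and>
     (\<forall>\<omega>\<in>space M. L 0 \<omega> = 0) \<and>
     cadlag_paths M L \<and>
     (\<forall>(n::nat) (t::nat \<Rightarrow> real). 0 \<le> t 0 \<longrightarrow> strict_mono t \<longrightarrow>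
        prob_space.indep_vars M (\<lambda>_. borel) (\<lambda>i \<omega>. L (t (Suc i)) \<omega> - L (t i) \<omega>) {..<n}) \<and>
     (\<forall>s t. 0 \<le> s \<longrightarrow> 0 \<le> t \<longrightarrow>
        distr M borel (\<lambda>\<omega>. L (s + t) \<omega> - L s \<omega>) = distr M borel (L t))"

definition levy_measure :: "'a measure \<Rightarrow> (real \<Rightarrow> 'a \<Rightarrow> real) \<Rightarrow> real set \<Rightarrow> ennreal" where
  "levy_measure M L B = (\<integral>\<^sup>+ \<omega>. emeasure (count_space UNIV)
      {t \<in> {0<..1}. jump L \<omega> t \<noteq> 0 \<and> jump L \<omega> t \<in> B} \<partial>M)"

definition spectrally_negative_levy :: "'a measure \<Rightarrow> (real \<Rightarrow> 'a \<Rightarrow> real) \<Rightarrow> bool" where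
  "spectrally_negative_levy M L \<longleftrightarrow>
     levy_process M L \<and>
     \<comment> \<open>no positive jumps\<close>
     (\<forall>\<omega>\<in>space M. \<forall>t>0. jump L \<omega> t \<le> 0) \<and>
     \<comment> \<open>not the negative of a subordinator (i.e. paths not a.s. nonincreasing)\<close>
     \<not> (AE \<omega> in M. antimono_on {0..} (\<lambda>t. L t \<omega>)) \<and>
     \<comment> \<open>Levy measure without atoms\<close>
     (\<forall>a. levy_measure M L {a} = 0)"

text \<open>Natural filtration generated by the process (equivalently by X = x + L).\<close>
definition nat_filtration :: "'a measure \<Rightarrow> (real \<Rightarrow> 'a \<Rightarrow> real) \<Rightarrow> ennreal \<Rightarrow> 'a measure" where
  "nat_filtration M L t = sigma (space M)
     {L s -` B \<inter> space M | s B. 0 \<le> s \<and> ennreal s \<le> t \<and> B \<in> sets borel}"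

definition ruin_time :: "(real \<Rightarrow> 'a \<Rightarrow> real) \<Rightarrow> real \<Rightarrow> 'a \<Rightarrow> ennreal" where
  "ruin_time L x \<omega> = Inf (ennreal ` {t. 0 \<le> t \<and> x + L t \<omega> \<le> 0})"

definition disc :: "real \<Rightarrow> ennreal \<Rightarrow> real" where
  "disc r t = (if t = \<infinity> then 0 else exp (- r * enn2real t))"

definition run_int :: "real \<Rightarrow> real \<Rightarrow> ennreal \<Rightarrow> ennreal \<Rightarrow> real" where
  "run_int r p a b = (LINT t:{t. 0 \<le> t \<and> a \<le> ennreal t \<and> ennreal t < b}|lborel. exp (- r * t) * p)"

definition ind :: "bool \<Rightarrow> real" where
  "ind P = (if P then 1 else 0)"

definition stop_set :: "'a measure \<Rightarrow> (real \<Rightarrow> 'a \<Rightarrow> real) \<Rightarrow> real \<Rightarrow> ('a \<Rightarrow> ennreal) set" where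
  "stop_set M L x = {\<tau>. stopping_time (nat_filtration M L) \<tau> \<and>
                         (AE \<omega> in M. \<tau> \<omega> \<le> ruin_time L x \<omega>)}"

definition stop_set_T :: "'a measure \<Rightarrow> (real \<Rightarrow> 'a \<Rightarrow> real) \<Rightarrow> real \<Rightarrow> real \<Rightarrow> ('a \<Rightarrow> ennreal) set" where
  "stop_set_T M L x T = {\<tau>. stopping_time (nat_filtration M L) \<tau> \<and>
                         (AE \<omega> in M. \<tau> \<omega> \<le> min (ruin_time L x \<omega>) (ennreal T))}"

definition u_val :: "'a measure \<Rightarrow> (real \<Rightarrow> 'a \<Rightarrow> real) \<Rightarrow> real \<Rightarrow> real \<Rightarrow> real \<Rightarrow> real \<Rightarrow> real \<Rightarrow> real" where
  "u_val M L r p \<gamma> \<alpha> x = (SUP \<tau> \<in> stop_set M L x.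
     (\<integral>\<omega>. ind (\<tau> \<omega> < \<infinity>) *
        (- run_int r p (\<tau> \<omega>) (ruin_time L x \<omega>)
         - disc r (\<tau> \<omega>) * \<gamma> * ind (\<tau> \<omega> < ruin_time L x \<omega>)
         + disc r (ruin_time L x \<omega>) * \<alpha> * ind (\<tau> \<omega> < ruin_time L x \<omega>)) \<partial>M))"

definition u_bar :: "'a measure \<Rightarrow> (real \<Rightarrow> 'a \<Rightarrow> real) \<Rightarrow> real \<Rightarrow> real \<Rightarrow> real \<Rightarrow> real \<Rightarrow> real \<Rightarrow> real \<Rightarrow> real" where
  "u_bar M L r p \<gamma> \<alpha> x T = (SUP \<tau> \<in> stop_set_T M L x T.
     (\<integral>\<omega>. - run_int r p (\<tau> \<omega>) (min (ruin_time L x \<omega>) (ennreal T))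
         - disc r (\<tau> \<omega>) * \<gamma> * ind (\<tau> \<omega> < min (ruin_time L x \<omega>) (ennreal T))
         + disc r (ruin_time L x \<omega>) * \<alpha> *
             ind (\<tau> \<omega> < ruin_time L x \<omega> \<and> ruin_time L x \<omega> < ennreal T) \<partial>M))"

definition u_tilde :: "'a measure \<Rightarrow> (real \<Rightarrow> 'a \<Rightarrow> real) \<Rightarrow> real \<Rightarrow> real \<Rightarrow> real \<Rightarrow> real \<Rightarrow> real \<Rightarrow> real \<Rightarrow> real" where
  "u_tilde M L r p \<gamma> \<alpha> x T = u_val M L r p \<gamma> \<alpha> x +
     (\<integral>\<omega>. ind (ruin_time L x \<omega> \<ge> ennreal T) * run_int r p (ennreal T) (ruin_time L x \<omega>) \<partial>M)"

end

theory Submission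
  imports Defs
begin

text \<open>Pathwise, the two optimal stopping problems differ only after the horizon T.
  Truncating a stopping time \<tau> \<le> \<theta> at T gives an admissible time for the horizon problem,
  and this loses at most the recovery e^(-r\<theta>) \<alpha> on {\<theta> \<ge> T}; conversely every time
  for the horizon problem is admissible for the infinite one, and the horizon problem gains at most the running cost after T and the exit cost e^(-rT) \<gamma>
  paid when stopping exactly at T. Taking expectations and suprema gives both bounds.
  The only analytic input is the measurability of \<theta>: right-continuous paths without
  upward jumps are lower semicontinuous, so {\<theta> \<le> s} is determined by the path at
  countably many rational times.\<close>

lemma disc_ennreal: "0 \<le> a \<Longrightarrow> disc r (ennreal a) = exp (- r * a)"
  by (simp add: disc_def)

lemma disc_nonneg: "0 \<le> disc r a"
  by (simp add: disc_def)

lemma disc_le_1: "0 \<le> r \<Longrightarrow> disc r a \<le> 1"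
  by (simp add: disc_def enn2real_nonneg)

lemma disc_antimono:
  assumes "0 \<le> r" "a \<le> b"
  shows "disc r b \<le> disc r a"
proof (cases "b = \<infinity>")
  case False
  then have "a \<noteq> \<infinity>" "enn2real a \<le> enn2real b"
    using assms by (auto simp: top_unique top.not_eq_extremum intro: enn2real_mono)
  with False assms show ?thesis
    by (simp add: disc_def mult_left_mono)
qed (simp add: disc_def)

text \<open>No integrability is needed: a non-integrable Bochner integral is 0 on both sides.\<close>

lemma run_int_scale: "run_int r p a b = run_int r 1 a b * p"
  unfolding run_int_def set_lebesgue_integral_def
  by (simp flip: integral_mult_left_zero add: mult.assoc)

lemma run_int_eq:
  assumes r: "r > 0"
  shows "run_int r p a b = p / r * max 0 (disc r a - disc r b)"
proof -
  have antideriv: "((\<lambda>t. - exp (- r * t) / r) has_real_derivative exp (- r * t)) (at t within S)"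
    for t S using r by (auto intro!: derivative_eq_intros)
  have "run_int r 1 a b = max 0 (disc r a - disc r b) / r"
  proof (cases a)
    case top
    then show ?thesis
      by (simp add: run_int_def top_unique disc_def set_lebesgue_integral_def)
  next
    case (real a')
    note a = this
    show ?thesis
    proof (cases b)
      case top
      have "{t. 0 \<le> t \<and> a \<le> ennreal t \<and> ennreal t < b} = {a'..}"
        using a top by auto
      then have "run_int r 1 a b = (LINT t:{a'..}|lborel. exp (- r * t))"
        by (simp add: run_int_def)
      also have "\<dots> = enn2real (\<integral>\<^sup>+ t. ennreal (indicator {a'..} t *\<^sub>R exp (- r * t)) \<partial>lborel)"
        unfolding set_lebesgue_integral_def by (intro integral_eq_nn_integral) auto
      also have "(\<integral>\<^sup>+ t. ennreal (indicator {a'..} t *\<^sub>R exp (- r * t)) \<partial>lborel)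
          = (\<integral>\<^sup>+ t. ennreal (exp (- r * t)) * indicator {a'..} t \<partial>lborel)"
        by (intro nn_integral_cong) (auto simp: indicator_def)
      also have "\<dots> = ennreal (0 - - exp (- r * a') / r)"
      proof (rule nn_integral_FTC_atLeast)
        show "((\<lambda>t. - exp (- r * t) / r) \<longlongrightarrow> 0) at_top"
          using r by real_asymp
      qed (use antideriv in auto)
      finally show ?thesis
        using a top r by (simp add: disc_def)
    next
      case (real b')
      show ?thesis
      proof (cases "a' < b'")
        case False
        then have "{t. 0 \<le> t \<and> a \<le> ennreal t \<and> ennreal t < b} = {}"
          using a real by (auto simp: ennreal_less_iff)
        moreover have "exp (- r * a') \<le> exp (- r * b')"
          using False r by (simp add: mult_left_mono)
        ultimately show ?thesis
          using a real
          by (simp add: run_int_def disc_def set_lebesgue_integral_def del: Collect_empty_eq)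
      next
        case True
        have "{t. 0 \<le> t \<and> a \<le> ennreal t \<and> ennreal t < b} = {a'..<b'}"
          using a real True by (auto simp: ennreal_less_iff)
        then have "run_int r 1 a b = (LINT t:{a'..<b'}|lborel. exp (- r * t))"
          by (simp add: run_int_def)
        also have "\<dots> = (LINT t:{a'..b'}|lborel. exp (- r * t))"
          by (rule set_integral_discrete_difference[where X="{b'}"]) auto
        also have "\<dots> = - exp (- r * b') / r - - exp (- r * a') / r"
          unfolding set_lebesgue_integral_def using True antideriv
          by (intro integral_FTC_atLeastAtMost)
            (auto simp: has_real_derivative_iff_has_vector_derivative intro!: continuous_intros)
        finally show ?thesis
          using a real r True by (simp add: disc_def field_simps)
      qed
    qed
  qed
  then show ?thesis
    by (subst run_int_scale) simp
qed

lemma run_int_nonneg: "0 < r \<Longrightarrow> 0 \<le> p \<Longrightarrow> 0 \<le> run_int r p a b"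
  by (simp add: run_int_eq)

lemma run_int_le:
  assumes "0 < r" "0 \<le> p"
  shows "run_int r p a b \<le> p / r"
  unfolding run_int_eq[OF \<open>0 < r\<close>]
  by (rule mult_left_le) (use assms disc_le_1[of r a] disc_nonneg[of r b] in auto)

lemma run_int_mono:
  assumes "0 < r" "0 \<le> p" "b \<le> b'"
  shows "run_int r p a b \<le> run_int r p a b'"
  unfolding run_int_eq[OF \<open>0 < r\<close>]
  by (rule mult_left_mono) (use assms disc_antimono[of r b b'] in auto)

lemma run_int_split:
  assumes r: "0 < r" and "a \<le> m" "m \<le> b"
  shows "run_int r p a b = run_int r p a m + run_int r p m b"
proof -
  have "disc r b \<le> disc r m" "disc r m \<le> disc r a"
    using assms disc_antimono[of r] by auto
  then have "max 0 (disc r a - disc r b) = max 0 (disc r a - disc r m) + max 0 (disc r m - disc r b)"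
    by simp
  then show ?thesis
    unfolding run_int_eq[OF r] by (simp only: distrib_left)
qed

definition cadlag_nonpos_jumps :: "(real \<Rightarrow> real) \<Rightarrow> bool" where
  "cadlag_nonpos_jumps f \<longleftrightarrow>
     (\<forall>t\<ge>0. continuous (at_right t) f) \<and>
     (\<forall>t>0. \<exists>l. (f \<longlongrightarrow> l) (at_left t) \<and> f t \<le> l)"

lemma cadlag_nonpos_jumps_lsc:
  assumes f: "cadlag_nonpos_jumps f" and "0 \<le> t" "y < f t"
  shows "\<exists>\<delta>>0. \<forall>u\<ge>0. \<bar>u - t\<bar> < \<delta> \<longrightarrow> y < f u"
proof -
  have "(f \<longlongrightarrow> f t) (at_right t)"
    using f \<open>0 \<le> t\<close> by (simp add: cadlag_nonpos_jumps_def continuous_within)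
  from order_tendstoD(1)[OF this \<open>y < f t\<close>]
  have right: "eventually (\<lambda>u. y < f u) (at_right t)" .
  show ?thesis
  proof (cases "t = 0")
    case True
    with right obtain b where "b > 0" and b: "\<And>u. 0 < u \<Longrightarrow> u < b \<Longrightarrow> y < f u"
      by (auto simp: eventually_at_right_field)
    have "y < f u" if "0 \<le> u" "\<bar>u - t\<bar> < b" for u
      using that b[of u] True \<open>y < f t\<close> by (cases "u = 0") auto
    with \<open>b > 0\<close> show ?thesis
      by blast
  next
    case False
    with \<open>0 \<le> t\<close> have "0 < t"
      by simp
    with f obtain l where l: "(f \<longlongrightarrow> l) (at_left t)" "f t \<le> l"
      unfolding cadlag_nonpos_jumps_def by blast
    from order_tendstoD(1)[OF l(1)] l(2) \<open>y < f t\<close>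
    have "eventually (\<lambda>u. y < f u) (at_left t)"
      by simp
    with right have "eventually (\<lambda>u. y < f u) (at t)"
      by (simp add: eventually_at_split)
    then obtain \<delta> where "\<delta> > 0" and \<delta>: "\<And>u. u \<noteq> t \<Longrightarrow> dist u t < \<delta> \<Longrightarrow> y < f u"
      by (auto simp: eventually_at)
    have "y < f u" if "\<bar>u - t\<bar> < \<delta>" for u
      using that \<delta>[of u] \<open>y < f t\<close> by (cases "u = t") (auto simp: dist_real_def)
    with \<open>\<delta> > 0\<close> show ?thesis
      by blast
  qed
qed

lemma cadlag_nonpos_jumps_compact_sublevel:
  assumes f: "cadlag_nonpos_jumps f"
  shows "compact {t \<in> {0..b}. f t \<le> y}"
  unfolding compact_eq_bounded_closed
proof
  show "bounded {t \<in> {0..b}. f t \<le> y}"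
    by (rule bounded_subset[of "{0..b}"]) auto
  show "closed {t \<in> {0..b}. f t \<le> y}"
    unfolding closed_sequential_limits
  proof (intro allI impI, elim conjE)
    fix X l assume X: "\<forall>n. X n \<in> {t \<in> {0..b}. f t \<le> y}" and lim: "X \<longlonglongrightarrow> l"
    have "l \<in> {0..b}"
      using closed_sequentially[OF closed_atLeastAtMost _ lim] X by auto
    moreover have "f l \<le> y"
    proof (rule ccontr)
      assume "\<not> f l \<le> y"
      then obtain \<delta> where "\<delta> > 0" "\<And>u. 0 \<le> u \<Longrightarrow> \<bar>u - l\<bar> < \<delta> \<Longrightarrow> y < f u"
        using cadlag_nonpos_jumps_lsc[OF f, of l y] \<open>l \<in> {0..b}\<close> by auto
      moreover obtain N where "dist (X N) l < \<delta>"
        using lim \<open>\<delta> > 0\<close> by (auto simp: lim_sequentially)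
      ultimately have "y < f (X N)"
        using X by (simp add: dist_real_def)
      then show False
        using X[rule_format, of N] by simp
    qed
    ultimately show "l \<in> {t \<in> {0..b}. f t \<le> y}"
      by simp
  qed
qed

lemma cadlag_nonpos_jumps_sublevel_limit:
  assumes f: "cadlag_nonpos_jumps f"
    and approx: "\<And>n. \<exists>t\<in>{0..s + 1 / Suc n}. f t \<le> c + 1 / Suc n"
  shows "\<exists>t\<in>{0..s}. f t \<le> c"
proof -
  define F where "F n = {t \<in> {0..s + 1 / Suc n}. f t \<le> c + 1 / Suc n}" for n :: nat
  have "\<Inter>(range F) \<noteq> {}"
  proof (rule compact_nest)
    show "compact (F n)" for n
      unfolding F_def by (rule cadlag_nonpos_jumps_compact_sublevel[OF f])
    show "F n \<noteq> {}" for n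
      using approx[of n] by (auto simp: F_def)
    show "F n \<subseteq> F m" if "m \<le> n" for m n
    proof -
      have "1 / real (Suc n) \<le> 1 / Suc m"
        using that by (simp add: frac_le)
      then show ?thesis
        by (auto simp: F_def)
    qed
  qed
  then obtain t where t: "\<And>n. t \<in> F n"
    by blast
  have le_of_approx: "a \<le> b" if "\<And>n. a \<le> b + 1 / Suc n" for a b :: real
  proof (rule field_le_epsilon)
    fix e :: real
    assume "0 < e"
    then obtain n :: nat where "1 / Suc n < e"
      by (rule nat_approx_posE)
    with that[of n] show "a \<le> b + e"
      by linarith
  qed
  have "t \<le> s" "f t \<le> c"
    by (rule le_of_approx, use t in \<open>simp add: F_def\<close>)+
  moreover have "0 \<le> t"
    using t[of 0] by (simp add: F_def)
  ultimately show ?thesis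
    by auto
qed

lemma cadlag_nonpos_jumps_hitting_time_le_iff:
  assumes f: "cadlag_nonpos_jumps f" and "0 \<le> s"
  shows "Inf (ennreal ` {t. 0 \<le> t \<and> f t \<le> c}) \<le> ennreal s \<longleftrightarrow> (\<exists>t\<in>{0..s}. f t \<le> c)"
proof
  assume "\<exists>t\<in>{0..s}. f t \<le> c"
  then obtain t where t: "0 \<le> t" "t \<le> s" "f t \<le> c"
    by auto
  then have "Inf (ennreal ` {t. 0 \<le> t \<and> f t \<le> c}) \<le> ennreal t"
    by (intro Inf_lower) auto
  also have "\<dots> \<le> ennreal s"
    using t by (simp add: ennreal_leI)
  finally show "Inf (ennreal ` {t. 0 \<le> t \<and> f t \<le> c}) \<le> ennreal s" .
next
  assume hit: "Inf (ennreal ` {t. 0 \<le> t \<and> f t \<le> c}) \<le> ennreal s"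
  show "\<exists>t\<in>{0..s}. f t \<le> c"
  proof (rule cadlag_nonpos_jumps_sublevel_limit[OF f])
    fix n :: nat
    have "ennreal s < ennreal (s + 1 / Suc n)"
      using \<open>0 \<le> s\<close> by (simp add: ennreal_lessI)
    with hit have "Inf (ennreal ` {t. 0 \<le> t \<and> f t \<le> c}) < ennreal (s + 1 / Suc n)"
      by (rule order.strict_trans1)
    then obtain t where t: "0 \<le> t" "f t \<le> c" "ennreal t < ennreal (s + 1 / Suc n)"
      by (auto simp: Inf_less_iff)
    have "0 < 1 / real (Suc n)"
      by simp
    moreover have "t < s + 1 / Suc n"
      using t by (simp add: ennreal_less_iff del: of_nat_Suc)
    ultimately have "t \<le> s + 1 / Suc n" "f t \<le> c + 1 / Suc n"
      using t(2) by linarith+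
    with t show "\<exists>t\<in>{0..s + 1 / Suc n}. f t \<le> c + 1 / Suc n"
      by auto
  qed
qed

lemma cadlag_nonpos_jumps_sublevel_iff_rat:
  assumes f: "cadlag_nonpos_jumps f"
  shows "(\<exists>t\<in>{0..s}. f t \<le> c) \<longleftrightarrow>
    (\<forall>n::nat. \<exists>q::rat. 0 \<le> real_of_rat q \<and> of_rat q \<le> s + 1 / Suc n \<and> f (of_rat q) \<le> c + 1 / Suc n)"
proof
  assume "\<exists>t\<in>{0..s}. f t \<le> c"
  then obtain t where t: "0 \<le> t" "t \<le> s" "f t \<le> c"
    by auto
  show "\<forall>n::nat. \<exists>q::rat. 0 \<le> real_of_rat q \<and> of_rat q \<le> s + 1 / Suc n \<and> f (of_rat q) \<le> c + 1 / Suc n"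
  proof
    fix n :: nat
    have "(f \<longlongrightarrow> f t) (at_right t)"
      using f t by (simp add: cadlag_nonpos_jumps_def continuous_within)
    moreover have "0 < 1 / real (Suc n)"
      by simp
    with t(3) have "f t < c + 1 / Suc n"
      by linarith
    ultimately have "eventually (\<lambda>u. f u < c + 1 / Suc n) (at_right t)"
      by (rule order_tendstoD(2))
    then obtain b where "b > t" and b: "\<And>u. t < u \<Longrightarrow> u < b \<Longrightarrow> f u < c + 1 / Suc n"
      by (auto simp: eventually_at_right_field)
    have "t < min b (t + 1 / Suc n)"
      using \<open>b > t\<close> by simp
    then obtain u where "u \<in> \<rat>" "t < u" "u < min b (t + 1 / Suc n)"
      using Rats_dense_in_real by blast
    then have "0 \<le> u \<and> u \<le> s + 1 / Suc n \<and> f u \<le> c + 1 / Suc n"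
      using t b[of u] by (simp add: less_imp_le)
    moreover from \<open>u \<in> \<rat>\<close> obtain q where "u = of_rat q"
      by (auto elim: Rats_cases)
    ultimately show "\<exists>q::rat. 0 \<le> real_of_rat q \<and> of_rat q \<le> s + 1 / Suc n \<and> f (of_rat q) \<le> c + 1 / Suc n"
      by (intro exI[of _ q]) (simp only:)
  qed
next
  assume approx: "\<forall>n::nat. \<exists>q::rat. 0 \<le> real_of_rat q \<and> of_rat q \<le> s + 1 / Suc n \<and> f (of_rat q) \<le> c + 1 / Suc n"
  show "\<exists>t\<in>{0..s}. f t \<le> c"
  proof (rule cadlag_nonpos_jumps_sublevel_limit[OF f])
    fix n :: nat
    from approx obtain q :: rat
      where "0 \<le> real_of_rat q" "of_rat q \<le> s + 1 / Suc n" "f (of_rat q) \<le> c + 1 / Suc n"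
      by blast
    then show "\<exists>t\<in>{0..s + 1 / Suc n}. f t \<le> c + 1 / Suc n"
      by (intro bexI[of _ "of_rat q"]) auto
  qed
qed

lemma spectrally_negative_levy_cadlag_nonpos_jumps:
  assumes sn: "spectrally_negative_levy M L" and "\<omega> \<in> space M"
  shows "cadlag_nonpos_jumps (\<lambda>t. x + L t \<omega>)"
  unfolding cadlag_nonpos_jumps_def
proof (intro conjI allI impI)
  have cadlag: "cadlag_paths M L" and jumps: "\<forall>t>0. jump L \<omega> t \<le> 0"
    using assms by (auto simp: spectrally_negative_levy_def levy_process_def)
  fix t :: real
  show "continuous (at_right t) (\<lambda>t. x + L t \<omega>)" if "0 \<le> t"
    using cadlag \<open>\<omega> \<in> space M\<close> that by (auto simp: cadlag_paths_def intro: continuous_add)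
  assume "0 < t"
  with cadlag \<open>\<omega> \<in> space M\<close> obtain l where l: "((\<lambda>s. L s \<omega>) \<longlongrightarrow> l) (at_left t)"
    unfolding cadlag_paths_def by blast
  then have "L t \<omega> \<le> l"
    using jumps \<open>0 < t\<close> tendsto_Lim[OF _ l] by (auto simp: jump_def left_lim_def)
  with l show "\<exists>l. ((\<lambda>t. x + L t \<omega>) \<longlongrightarrow> l) (at_left t) \<and> x + L t \<omega> \<le> l"
    by (intro exI[of _ "x + l"]) (auto intro: tendsto_add)
qed

lemma measurable_ruin_time:
  assumes sn: "spectrally_negative_levy M L"
  shows "ruin_time L x \<in> borel_measurable M"
proof (rule borel_measurableI_le)
  have [measurable]: "L t \<in> borel_measurable M" for t
    using sn by (simp add: spectrally_negative_levy_def levy_process_def)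
  fix y :: ennreal
  show "{\<omega> \<in> space M. ruin_time L x \<omega> \<le> y} \<in> sets M"
  proof (cases y)
    case (real s)
    have "{\<omega> \<in> space M. ruin_time L x \<omega> \<le> y} =
      {\<omega> \<in> space M. \<forall>n::nat. \<exists>q::rat. 0 \<le> real_of_rat q \<and> of_rat q \<le> s + 1 / Suc n \<and>
                                    x + L (of_rat q) \<omega> \<le> 0 + 1 / Suc n}"
    proof (intro Collect_cong conj_cong refl)
      fix \<omega>
      assume "\<omega> \<in> space M"
      with sn have f: "cadlag_nonpos_jumps (\<lambda>t. x + L t \<omega>)"
        by (rule spectrally_negative_levy_cadlag_nonpos_jumps)
      show "ruin_time L x \<omega> \<le> y \<longleftrightarrow> (\<forall>n::nat. \<exists>q::rat. 0 \<le> real_of_rat q \<and> of_rat q \<le> s + 1 / Suc n \<and>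
                                    x + L (of_rat q) \<omega> \<le> 0 + 1 / Suc n)"
        unfolding ruin_time_def real cadlag_nonpos_jumps_hitting_time_le_iff[OF f \<open>0 \<le> s\<close>]
        by (rule cadlag_nonpos_jumps_sublevel_iff_rat[OF f])
    qed
    also have "\<dots> \<in> sets M"
      by measurable
    finally show ?thesis .
  qed simp
qed

lemma ind_simps [simp]: "ind True = 1" "ind False = 0"
  by (simp_all add: ind_def)

definition reward :: "real \<Rightarrow> real \<Rightarrow> real \<Rightarrow> real \<Rightarrow> ennreal \<Rightarrow> ennreal \<Rightarrow> real" where
  "reward r p \<gamma> \<alpha> s h = ind (s < \<infinity>) *
     (- run_int r p s h - disc r s * \<gamma> * ind (s < h) + disc r h * \<alpha> * ind (s < h))"

definition horizon_reward :: "real \<Rightarrow> real \<Rightarrow> real \<Rightarrow> real \<Rightarrow> real \<Rightarrow> ennreal \<Rightarrow> ennreal \<Rightarrow> real" where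
  "horizon_reward r p \<gamma> \<alpha> T s h =
     - run_int r p s (min h (ennreal T)) - disc r s * \<gamma> * ind (s < min h (ennreal T))
     + disc r h * \<alpha> * ind (s < h \<and> h < ennreal T)"

lemma u_val_reward:
  "u_val M L r p \<gamma> \<alpha> x = (SUP \<tau> \<in> stop_set M L x. \<integral>\<omega>. reward r p \<gamma> \<alpha> (\<tau> \<omega>) (ruin_time L x \<omega>) \<partial>M)"
  by (simp add: u_val_def reward_def)

lemma u_bar_horizon_reward:
  "u_bar M L r p \<gamma> \<alpha> x T =
     (SUP \<tau> \<in> stop_set_T M L x T. \<integral>\<omega>. horizon_reward r p \<gamma> \<alpha> T (\<tau> \<omega>) (ruin_time L x \<omega>) \<partial>M)"
  by (simp add: u_bar_def horizon_reward_def)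

lemma abs_reward_le:
  assumes "0 < r" "0 \<le> p" "0 \<le> \<gamma>" "0 \<le> \<alpha>"
  shows "\<bar>reward r p \<gamma> \<alpha> s h\<bar> \<le> p / r + \<gamma> + \<alpha>"
  using assms run_int_nonneg[of r p s h] run_int_le[of r p s h]
    mult_left_le_one_le[OF \<open>0 \<le> \<gamma>\<close> disc_nonneg disc_le_1, of r s]
    mult_left_le_one_le[OF \<open>0 \<le> \<alpha>\<close> disc_nonneg disc_le_1, of r h]
    mult_nonneg_nonneg[OF disc_nonneg \<open>0 \<le> \<gamma>\<close>, of r s] mult_nonneg_nonneg[OF disc_nonneg \<open>0 \<le> \<alpha>\<close>, of r h]
  by (auto simp: reward_def ind_def mult.commute)

lemma abs_horizon_reward_le:
  assumes "0 < r" "0 \<le> p" "0 \<le> \<gamma>" "0 \<le> \<alpha>"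
  shows "\<bar>horizon_reward r p \<gamma> \<alpha> T s h\<bar> \<le> p / r + \<gamma> + \<alpha>"
  using assms run_int_nonneg[of r p s "min h (ennreal T)"] run_int_le[of r p s "min h (ennreal T)"]
    mult_left_le_one_le[OF \<open>0 \<le> \<gamma>\<close> disc_nonneg disc_le_1, of r s]
    mult_left_le_one_le[OF \<open>0 \<le> \<alpha>\<close> disc_nonneg disc_le_1, of r h]
    mult_nonneg_nonneg[OF disc_nonneg \<open>0 \<le> \<gamma>\<close>, of r s] mult_nonneg_nonneg[OF disc_nonneg \<open>0 \<le> \<alpha>\<close>, of r h]
  by (auto simp: horizon_reward_def ind_def mult.commute)

lemma reward_le_horizon_reward_min:
  assumes r: "0 < r" and "0 \<le> p" "0 \<le> \<gamma>" "0 \<le> \<alpha>" and "s \<le> h"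
  shows "reward r p \<gamma> \<alpha> s h - ind (ennreal T \<le> h) * disc r h * \<alpha>
    \<le> horizon_reward r p \<gamma> \<alpha> T (min s (ennreal T)) h"
proof (cases "s < ennreal T")
  case True
  then have "min s (ennreal T) = s" "s < \<infinity>"
    by (auto simp: top.not_eq_extremum order_less_le_trans)
  moreover have "run_int r p s (min h (ennreal T)) \<le> run_int r p s h"
    using assms by (intro run_int_mono) auto
  moreover have "ind (s < h) * disc r h * \<alpha> - ind (ennreal T \<le> h) * disc r h * \<alpha>
      \<le> disc r h * \<alpha> * ind (s < h \<and> h < ennreal T)"
    using disc_nonneg[of r h] \<open>0 \<le> \<alpha>\<close> by (auto simp: ind_def not_less)
  ultimately show ?thesis
    using True by (simp add: reward_def horizon_reward_def algebra_simps)
next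
  case False
  \<comment> \<open>Stopping at or after the horizon: the truncated reward vanishes and the original one
    is at most the recovery.\<close>
  with \<open>s \<le> h\<close> have T: "min s (ennreal T) = ennreal T" "ennreal T \<le> h"
    by (auto simp: min_def)
  have "reward r p \<gamma> \<alpha> s h \<le> disc r h * \<alpha>"
    using assms run_int_nonneg[of r p s h] mult_nonneg_nonneg[OF disc_nonneg \<open>0 \<le> \<gamma>\<close>, of r s]
      mult_nonneg_nonneg[OF disc_nonneg \<open>0 \<le> \<alpha>\<close>, of r h]
    by (auto simp: reward_def ind_def)
  moreover have "ind (ennreal T < h \<and> h < ennreal T) = 0"
    by (auto simp: ind_def)
  ultimately show ?thesis
    using T r by (simp add: horizon_reward_def run_int_eq min_absorb2)
qed

lemma horizon_reward_le_reward:
  assumes r: "0 < r" and "0 \<le> p" "0 \<le> \<gamma>" "0 \<le> \<alpha>" "0 \<le> T" and "s \<le> h" "s \<le> ennreal T"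
  shows "horizon_reward r p \<gamma> \<alpha> T s h
    \<le> reward r p \<gamma> \<alpha> s h + ind (ennreal T \<le> h) * run_int r p (ennreal T) h
       + ind (ennreal T \<le> h) * exp (- r * T) * \<gamma>"
proof -
  have "s < \<infinity>"
    using \<open>s \<le> ennreal T\<close> by (simp add: order_le_less_trans)
  show ?thesis
  proof (cases "h < ennreal T")
    case True
    then have "\<not> ennreal T \<le> h"
      by simp
    with True \<open>s < \<infinity>\<close> show ?thesis
      by (simp add: reward_def horizon_reward_def)
  next
    case False
    then have T: "min h (ennreal T) = ennreal T" "ennreal T \<le> h"
      by auto
    have split: "run_int r p s h = run_int r p s (ennreal T) + run_int r p (ennreal T) h"
      using r \<open>s \<le> ennreal T\<close> T(2) by (rule run_int_split)
    \<comment> \<open>Stopping exactly at the horizon before ruin costs at most the discounted exit cost there.\<close>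
    have exit_cost: "- disc r s * \<gamma> * ind (s < ennreal T)
        \<le> - disc r s * \<gamma> * ind (s < h) + disc r h * \<alpha> * ind (s < h) + exp (- r * T) * \<gamma>"
    proof (cases "s < ennreal T")
      case True
      with T(2) have "s < h"
        by (simp add: order_less_le_trans)
      with True show ?thesis
        using disc_nonneg[of r h] assms by simp
    next
      case False
      with \<open>s \<le> ennreal T\<close> have "s = ennreal T"
        by simp
      then show ?thesis
        using disc_nonneg[of r h] assms
        by (cases "ennreal T < h") (simp_all add: disc_ennreal)
    qed
    have "ind (s < h \<and> h < ennreal T) = 0"
      using T(2) by (auto simp: ind_def)
    then show ?thesis
      using T \<open>s < \<infinity>\<close> split exit_cost by (simp add: reward_def horizon_reward_def algebra_simps)
  qed
qed

lemma measurable_disc [measurable]: "disc r \<in> borel_measurable borel"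
  unfolding disc_def by measurable

lemma measurable_ind [measurable (raw)]: "Measurable.pred M P \<Longrightarrow> (\<lambda>\<omega>. ind (P \<omega>)) \<in> borel_measurable M"
  unfolding ind_def by measurable

lemma sets_nat_filtration:
  assumes "\<And>t. L t \<in> borel_measurable M"
  shows "sets (nat_filtration M L t) \<subseteq> sets M" "space (nat_filtration M L t) = space M"
proof -
  have gen: "{L s -` B \<inter> space M | s B. 0 \<le> s \<and> ennreal s \<le> t \<and> B \<in> sets borel} \<subseteq> sets M"
    using assms by (auto intro: measurable_sets)
  then have space: "{L s -` B \<inter> space M | s B. 0 \<le> s \<and> ennreal s \<le> t \<and> B \<in> sets borel} \<subseteq> Pow (space M)"
    using sets.sets_into_space by blast
  show "sets (nat_filtration M L t) \<subseteq> sets M"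
    unfolding nat_filtration_def sets_measure_of[OF space] by (rule sets.sigma_sets_subset[OF gen])
  show "space (nat_filtration M L t) = space M"
    unfolding nat_filtration_def by (simp add: space_measure_of_conv)
qed

lemma cSUP_le_cSUP_add:
  fixes f :: "'a \<Rightarrow> real" and g :: "'b \<Rightarrow> real"
  assumes "A \<noteq> {}" "bdd_above (g ` B)" and dominated: "\<And>a. a \<in> A \<Longrightarrow> \<exists>b\<in>B. f a \<le> g b + c"
  shows "(SUP a\<in>A. f a) \<le> (SUP b\<in>B. g b) + c"
proof (rule cSUP_least[OF \<open>A \<noteq> {}\<close>])
  fix a
  assume "a \<in> A"
  with dominated obtain b where "b \<in> B" "f a \<le> g b + c"
    by blast
  moreover from \<open>b \<in> B\<close> have "g b \<le> (SUP b\<in>B. g b)"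
    using \<open>bdd_above (g ` B)\<close> by (rule cSUP_upper)
  ultimately show "f a \<le> (SUP b\<in>B. g b) + c"
    by linarith
qed

lemma stop_set_nonempty: "(\<lambda>_. 0) \<in> stop_set M L x"
  by (simp add: stop_set_def stopping_time_const)

lemma stop_set_T_subset: "stop_set_T M L x T \<subseteq> stop_set M L x"
  by (auto simp: stop_set_def stop_set_T_def elim!: eventually_mono)

lemma min_horizon_in_stop_set_T: "\<tau> \<in> stop_set M L x \<Longrightarrow> (\<lambda>\<omega>. min (\<tau> \<omega>) (ennreal T)) \<in> stop_set_T M L x T"
  by (auto simp: stop_set_def stop_set_T_def min_le_iff_disj
           intro!: stopping_time_min stopping_time_const elim!: eventually_mono)

context
  fixes M :: "'a measure" and L :: "real \<Rightarrow> 'a \<Rightarrow> real" and x :: real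
  assumes sn: "spectrally_negative_levy M L"
begin

interpretation prob_space M
  using sn by (simp add: spectrally_negative_levy_def levy_process_def)

lemma measurable_levy [measurable]: "L t \<in> borel_measurable M"
  using sn by (simp add: spectrally_negative_levy_def levy_process_def)

lemma measurable_ruin [measurable]: "ruin_time L x \<in> borel_measurable M"
  using sn by (rule measurable_ruin_time)

lemma measurable_stop_set: "\<tau> \<in> stop_set M L x \<Longrightarrow> \<tau> \<in> borel_measurable M"
  and measurable_stop_set_T: "\<tau> \<in> stop_set_T M L x T \<Longrightarrow> \<tau> \<in> borel_measurable M"
  using sets_nat_filtration[of L M] measurable_levy
  by (auto simp: stop_set_def stop_set_T_def intro!: measurable_stopping_time)

lemma integrable_bounded:
  fixes f :: "'a \<Rightarrow> real"
  shows "f \<in> borel_measurable M \<Longrightarrow> (\<And>\<omega>. \<bar>f \<omega>\<bar> \<le> B) \<Longrightarrow> integrable M f"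
  by (rule integrable_const_bound[where B=B]) auto

context
  fixes r p \<gamma> \<alpha> T :: real
  assumes r: "0 < r" and p: "0 \<le> p" and \<gamma>: "0 \<le> \<gamma>" and \<alpha>: "0 \<le> \<alpha>" and T: "0 \<le> T"
begin

lemma integrable_reward:
  "\<tau> \<in> borel_measurable M \<Longrightarrow> integrable M (\<lambda>\<omega>. reward r p \<gamma> \<alpha> (\<tau> \<omega>) (ruin_time L x \<omega>))"
  using abs_reward_le[OF r p \<gamma> \<alpha>]
  by (intro integrable_bounded) (auto simp: reward_def run_int_eq[OF r])

lemma integrable_horizon_reward:
  "\<tau> \<in> borel_measurable M \<Longrightarrow> integrable M (\<lambda>\<omega>. horizon_reward r p \<gamma> \<alpha> T (\<tau> \<omega>) (ruin_time L x \<omega>))"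
  using abs_horizon_reward_le[OF r p \<gamma> \<alpha>]
  by (intro integrable_bounded) (auto simp: horizon_reward_def run_int_eq[OF r])

lemma bdd_above_reward_values:
  "bdd_above ((\<lambda>\<tau>. \<integral>\<omega>. reward r p \<gamma> \<alpha> (\<tau> \<omega>) (ruin_time L x \<omega>) \<partial>M) ` stop_set M L x)"
  using abs_reward_le[OF r p \<gamma> \<alpha>]
  by (intro bdd_aboveI2 integral_le_const integrable_reward measurable_stop_set)
    (auto simp: abs_le_iff)

lemma bdd_above_horizon_reward_values:
  "bdd_above ((\<lambda>\<tau>. \<integral>\<omega>. horizon_reward r p \<gamma> \<alpha> T (\<tau> \<omega>) (ruin_time L x \<omega>) \<partial>M) ` stop_set_T M L x T)"
  using abs_horizon_reward_le[OF r p \<gamma> \<alpha>]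
  by (intro bdd_aboveI2 integral_le_const integrable_horizon_reward measurable_stop_set_T)
    (auto simp: abs_le_iff)

lemma integrable_recovery:
  "integrable M (\<lambda>\<omega>. ind (ennreal T \<le> ruin_time L x \<omega>) * disc r (ruin_time L x \<omega>) * \<alpha>)"
  using disc_nonneg disc_le_1 r \<alpha>
  by (intro integrable_bounded[where B=\<alpha>]) (measurable, auto simp: ind_def mult_left_le_one_le)

lemma integrable_run_tail:
  "integrable M (\<lambda>\<omega>. ind (ennreal T \<le> ruin_time L x \<omega>) * run_int r p (ennreal T) (ruin_time L x \<omega>))"
  using r p run_int_nonneg[OF r p] run_int_le[OF r p]
  by (intro integrable_bounded[where B="p / r"]) (measurable, auto simp: ind_def run_int_eq)

lemma u_val_le_u_bar_add:
  "u_val M L r p \<gamma> \<alpha> x \<le> u_bar M L r p \<gamma> \<alpha> x T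
     + (\<integral>\<omega>. ind (ennreal T \<le> ruin_time L x \<omega>) * disc r (ruin_time L x \<omega>) * \<alpha> \<partial>M)"
proof -
  let ?\<theta> = "ruin_time L x"
  define recovery where "recovery \<omega> = ind (ennreal T \<le> ?\<theta> \<omega>) * disc r (?\<theta> \<omega>) * \<alpha>" for \<omega>
  have integrable_recovery: "integrable M recovery"
    using integrable_recovery by (simp add: recovery_def[abs_def])
  have "(SUP \<tau>\<in>stop_set M L x. \<integral>\<omega>. reward r p \<gamma> \<alpha> (\<tau> \<omega>) (?\<theta> \<omega>) \<partial>M)
    \<le> (SUP \<sigma>\<in>stop_set_T M L x T. \<integral>\<omega>. horizon_reward r p \<gamma> \<alpha> T (\<sigma> \<omega>) (?\<theta> \<omega>) \<partial>M) + integral\<^sup>L M recovery"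
  proof (rule cSUP_le_cSUP_add[OF _ bdd_above_horizon_reward_values])
    fix \<tau>
    assume \<tau>: "\<tau> \<in> stop_set M L x"
    then have [measurable]: "\<tau> \<in> borel_measurable M"
      by (rule measurable_stop_set)
    define \<sigma> where "\<sigma> \<omega> = min (\<tau> \<omega>) (ennreal T)" for \<omega>
    have "(\<integral>\<omega>. reward r p \<gamma> \<alpha> (\<tau> \<omega>) (?\<theta> \<omega>) \<partial>M) - integral\<^sup>L M recovery
        = (\<integral>\<omega>. reward r p \<gamma> \<alpha> (\<tau> \<omega>) (?\<theta> \<omega>) - recovery \<omega> \<partial>M)"
      using integrable_reward integrable_recovery by simp
    also have "\<dots> \<le> (\<integral>\<omega>. horizon_reward r p \<gamma> \<alpha> T (\<sigma> \<omega>) (?\<theta> \<omega>) \<partial>M)"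
    proof (rule integral_mono_AE)
      show "integrable M (\<lambda>\<omega>. reward r p \<gamma> \<alpha> (\<tau> \<omega>) (?\<theta> \<omega>) - recovery \<omega>)"
        using integrable_reward integrable_recovery by simp
      show "integrable M (\<lambda>\<omega>. horizon_reward r p \<gamma> \<alpha> T (\<sigma> \<omega>) (?\<theta> \<omega>))"
        by (rule integrable_horizon_reward) (simp add: \<sigma>_def)
      show "AE \<omega> in M. reward r p \<gamma> \<alpha> (\<tau> \<omega>) (?\<theta> \<omega>) - recovery \<omega>
          \<le> horizon_reward r p \<gamma> \<alpha> T (\<sigma> \<omega>) (?\<theta> \<omega>)"
        using \<tau> reward_le_horizon_reward_min[OF r p \<gamma> \<alpha>]
        by (auto simp: stop_set_def recovery_def \<sigma>_def elim!: eventually_mono)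
    qed
    finally show "\<exists>\<sigma>\<in>stop_set_T M L x T. (\<integral>\<omega>. reward r p \<gamma> \<alpha> (\<tau> \<omega>) (?\<theta> \<omega>) \<partial>M)
        \<le> (\<integral>\<omega>. horizon_reward r p \<gamma> \<alpha> T (\<sigma> \<omega>) (?\<theta> \<omega>) \<partial>M) + integral\<^sup>L M recovery"
      using min_horizon_in_stop_set_T[OF \<tau>] unfolding \<sigma>_def by force
  qed (use stop_set_nonempty in blast)
  then show ?thesis
    by (simp add: u_val_reward u_bar_horizon_reward recovery_def[abs_def])
qed

lemma u_bar_le_u_val_add:
  "u_bar M L r p \<gamma> \<alpha> x T \<le> u_val M L r p \<gamma> \<alpha> x
     + (\<integral>\<omega>. ind (ennreal T \<le> ruin_time L x \<omega>) * run_int r p (ennreal T) (ruin_time L x \<omega>) \<partial>M)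
     + (\<integral>\<omega>. ind (ennreal T \<le> ruin_time L x \<omega>) * exp (- r * T) * \<gamma> \<partial>M)"
proof -
  let ?\<theta> = "ruin_time L x"
  define run_tail where "run_tail \<omega> = ind (ennreal T \<le> ?\<theta> \<omega>) * run_int r p (ennreal T) (?\<theta> \<omega>)" for \<omega>
  define exit_tail where "exit_tail \<omega> = ind (ennreal T \<le> ?\<theta> \<omega>) * exp (- r * T) * \<gamma>" for \<omega>
  have integrable_run_tail: "integrable M run_tail"
    using integrable_run_tail by (simp add: run_tail_def[abs_def])
  have integrable_exit_tail: "integrable M exit_tail"
    using \<gamma> by (intro integrable_bounded[where B="exp (- r * T) * \<gamma>"])
      (measurable, auto simp: exit_tail_def[abs_def] ind_def)
  have "(SUP \<tau>\<in>stop_set_T M L x T. \<integral>\<omega>. horizon_reward r p \<gamma> \<alpha> T (\<tau> \<omega>) (?\<theta> \<omega>) \<partial>M)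
    \<le> (SUP \<tau>\<in>stop_set M L x. \<integral>\<omega>. reward r p \<gamma> \<alpha> (\<tau> \<omega>) (?\<theta> \<omega>) \<partial>M)
       + (integral\<^sup>L M run_tail + integral\<^sup>L M exit_tail)"
  proof (rule cSUP_le_cSUP_add[OF _ bdd_above_reward_values])
    fix \<tau>
    assume \<tau>: "\<tau> \<in> stop_set_T M L x T"
    then have [measurable]: "\<tau> \<in> borel_measurable M"
      by (rule measurable_stop_set_T)
    have "(\<integral>\<omega>. horizon_reward r p \<gamma> \<alpha> T (\<tau> \<omega>) (?\<theta> \<omega>) \<partial>M)
        \<le> (\<integral>\<omega>. reward r p \<gamma> \<alpha> (\<tau> \<omega>) (?\<theta> \<omega>) + run_tail \<omega> + exit_tail \<omega> \<partial>M)"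
    proof (rule integral_mono_AE)
      show "integrable M (\<lambda>\<omega>. horizon_reward r p \<gamma> \<alpha> T (\<tau> \<omega>) (?\<theta> \<omega>))"
        by (rule integrable_horizon_reward) simp
      show "integrable M (\<lambda>\<omega>. reward r p \<gamma> \<alpha> (\<tau> \<omega>) (?\<theta> \<omega>) + run_tail \<omega> + exit_tail \<omega>)"
        using integrable_reward integrable_run_tail integrable_exit_tail by simp
      show "AE \<omega> in M. horizon_reward r p \<gamma> \<alpha> T (\<tau> \<omega>) (?\<theta> \<omega>)
          \<le> reward r p \<gamma> \<alpha> (\<tau> \<omega>) (?\<theta> \<omega>) + run_tail \<omega> + exit_tail \<omega>"
      proof -
        from \<tau> have "AE \<omega> in M. \<tau> \<omega> \<le> min (?\<theta> \<omega>) (ennreal T)"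
          by (simp add: stop_set_T_def)
        then show ?thesis
          by (rule eventually_mono)
            (use horizon_reward_le_reward[OF r p \<gamma> \<alpha> T] in \<open>simp add: run_tail_def exit_tail_def\<close>)
      qed
    qed
    also have "\<dots> = (\<integral>\<omega>. reward r p \<gamma> \<alpha> (\<tau> \<omega>) (?\<theta> \<omega>) \<partial>M)
        + (integral\<^sup>L M run_tail + integral\<^sup>L M exit_tail)"
      using integrable_reward integrable_run_tail integrable_exit_tail by simp
    finally show "\<exists>\<sigma>\<in>stop_set M L x. (\<integral>\<omega>. horizon_reward r p \<gamma> \<alpha> T (\<tau> \<omega>) (?\<theta> \<omega>) \<partial>M)
        \<le> (\<integral>\<omega>. reward r p \<gamma> \<alpha> (\<sigma> \<omega>) (?\<theta> \<omega>) \<partial>M) + (integral\<^sup>L M run_tail + integral\<^sup>L M exit_tail)"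
      using \<tau> stop_set_T_subset by blast
  qed (use min_horizon_in_stop_set_T[OF stop_set_nonempty] in blast)
  then show ?thesis
    by (simp add: u_val_reward u_bar_horizon_reward run_tail_def[abs_def] exit_tail_def[abs_def])
qed

end

end

theorem lemma5p3:
  fixes M :: "'a measure" and L :: "real \<Rightarrow> 'a \<Rightarrow> real"
    and r p \<alpha> \<gamma> x T :: real
  assumes "spectrally_negative_levy M L"
    and "integrable M (\<lambda>\<omega>. exp (L 1 \<omega>))"
    and "ln (\<integral>\<omega>. exp (L 1 \<omega>) \<partial>M) = r"
    and "r > 0"
    and "p > 0" and "\<alpha> > 0" and "\<gamma> \<ge> 0"
    and "x > 0" and "T > 0"
  shows "u_tilde M L r p \<gamma> \<alpha> x T
           - (\<integral>\<omega>. ind (ruin_time L x \<omega> \<ge> ennreal T) *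
                 (run_int r p (ennreal T) (ruin_time L x \<omega>) + disc r (ruin_time L x \<omega>) * \<alpha>) \<partial>M)
         \<le> u_bar M L r p \<gamma> \<alpha> x T \<and>
         u_bar M L r p \<gamma> \<alpha> x T
         \<le> u_tilde M L r p \<gamma> \<alpha> x T
           + (\<integral>\<omega>. ind (ruin_time L x \<omega> \<ge> ennreal T) * exp (- r * T) * \<gamma> \<partial>M)"
proof -
  note levy = \<open>spectrally_negative_levy M L\<close>
  have params: "0 < r" "0 \<le> p" "0 \<le> \<gamma>" "0 \<le> \<alpha>" "0 \<le> T"
    using assms by auto
  have "(\<integral>\<omega>. ind (ruin_time L x \<omega> \<ge> ennreal T) *
          (run_int r p (ennreal T) (ruin_time L x \<omega>) + disc r (ruin_time L x \<omega>) * \<alpha>) \<partial>M)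
      = (\<integral>\<omega>. ind (ruin_time L x \<omega> \<ge> ennreal T) * run_int r p (ennreal T) (ruin_time L x \<omega>) \<partial>M)
        + (\<integral>\<omega>. ind (ruin_time L x \<omega> \<ge> ennreal T) * disc r (ruin_time L x \<omega>) * \<alpha> \<partial>M)"
    using integrable_run_tail[OF levy params, where x=x] integrable_recovery[OF levy params, where x=x]
    by (simp add: distrib_left mult.assoc)
  then show ?thesis
    using u_val_le_u_bar_add[OF levy params, where x=x] u_bar_le_u_val_add[OF levy params, where x=x]
    unfolding u_tilde_def by linarith
qed

end
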